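(* Let $K$ and $L$ be finite simplicial complexes. If $K$ and $L$ have the same simple homotopy type, then $\overline{\mathrm{rank}}(K)=\overline{\mathrm{rank}}(L)$, where $\overline{\mathrm{rank}}(K):=|\mathcal{X}(K)|-\mathrm{rank}(\mathcal{X}(K)_M)$.
   Context: $\mathcal{X}(K)$ is the face poset of $K$ (simplices ordered by inclusion). For a finite poset $X=\{x_1,\dots,x_n\}$ (with a labelling), $X_M=(x_{i,j})$ is the $n\times n$ matrix with $x_{i,j}=0$ if $x_i\le x_j$ and $x_{i,j}=1$ otherwise. Simple homotopy type of simplicial complexes is in the classical sense of Whitehead. *)

theory Defs
  imports "HOL-Analysis.Analysis" "Jordan_Normal_Form.DL_Rank"
begin

definition simplicial_complex :: "'a set set \<Rightarrow> bool" where
  "simplicial_complex K \<longleftrightarrow>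
     (\<forall>\<sigma>\<in>K. finite \<sigma> \<and> \<sigma> \<noteq> {}) \<and>
     (\<forall>\<sigma>\<in>K. \<forall>\<tau>. \<tau> \<subseteq> \<sigma> \<and> \<tau> \<noteq> {} \<longrightarrow> \<tau> \<in> K)"

definition finite_simplicial_complex :: "'a set set \<Rightarrow> bool" where
  "finite_simplicial_complex K \<longleftrightarrow> simplicial_complex K \<and> finite K"

definition vertices :: "'a set set \<Rightarrow> 'a set" where
  "vertices K = \<Union>K"

definition simplicial_iso :: "('a \<Rightarrow> 'b) \<Rightarrow> 'a set set \<Rightarrow> 'b set set \<Rightarrow> bool" where
  "simplicial_iso f K L \<longleftrightarrow>
     bij_betw f (vertices K) (vertices L) \<and> (\<lambda>\<sigma>. f ` \<sigma>) ` K = L"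

definition isomorphic_complexes :: "'a set set \<Rightarrow> 'b set set \<Rightarrow> bool" where
  "isomorphic_complexes K L \<longleftrightarrow> (\<exists>f. simplicial_iso f K L)"

definition elementary_collapse :: "'a set set \<Rightarrow> 'a set set \<Rightarrow> bool" where
  "elementary_collapse K L \<longleftrightarrow>
     (\<exists>\<sigma> \<tau>. \<sigma> \<in> K \<and> \<tau> \<in> K \<and> \<tau> \<subset> \<sigma> \<and> card \<sigma> = card \<tau> + 1 \<and>
            (\<forall>\<rho>\<in>K. \<tau> \<subset> \<rho> \<longrightarrow> \<rho> = \<sigma>) \<and>
            L = K - {\<sigma>, \<tau>})"

definition elementary_move :: "'a set set \<Rightarrow> 'a set set \<Rightarrow> bool" where
  "elementary_move K L \<longleftrightarrow> elementary_collapse K L \<or> elementary_collapse L K"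

text \<open>Complexes are transported to the vertex type nat,
which supplies arbitrarily many fresh vertices for expansions.\<close>

definition simple_homotopy_equivalent :: "'a set set \<Rightarrow> 'b set set \<Rightarrow> bool" where
  "simple_homotopy_equivalent K L \<longleftrightarrow>
     (\<exists>K' L' :: nat set set.
        finite_simplicial_complex K' \<and> finite_simplicial_complex L' \<and>
        isomorphic_complexes K K' \<and> isomorphic_complexes L L' \<and>
        (\<lambda>A B. elementary_move A B \<and> finite_simplicial_complex A \<and>
               finite_simplicial_complex B)\<^sup>*\<^sup>* K' L')"

definition face_labelling :: "'a set set \<Rightarrow> nat \<Rightarrow> 'a set" where
  "face_labelling K = (SOME x. bij_betw x {..<card K} K)"

definition face_poset_matrix :: "'a set set \<Rightarrow> real mat" where
  "face_poset_matrix K =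
     (let x = face_labelling K
      in mat (card K) (card K) (\<lambda>(i, j). if x i \<subseteq> x j then 0 else 1))"

definition rank_bar :: "'a set set \<Rightarrow> int" where
  "rank_bar K = int (card K) - int (vec_space.rank (card K) (face_poset_matrix K))"

end

theory Submission
  imports Defs
begin

(*
  Write X_M = J - Z with J the all-ones matrix and Z the zeta matrix of the labelled poset.
  Z is unitriangular up to reordering, hence invertible, so X_M has corank at most one.
  X_M^T v = 0 says that every downset sum of v equals the total sum s of v, which by Moebius
  inversion forces v = s w, where w is the function all of whose downset sums are 1; a nonzero
  such v exists exactly when sum w = 1, because s = sum v = s * sum w.  For a face poset
  w(sigma) = (-1)^(dim sigma), so sum w is the Euler characteristic, and rank_bar K is 1 or 0
  according as chi(K) = 1 or not.  Elementary collapses remove two simplices of adjacent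
  dimensions and isomorphisms preserve dimensions, so chi, and with it rank_bar, is a simple
  homotopy invariant.
*)

definition euler_char :: "'a set set \<Rightarrow> int" where
  "euler_char K = (\<Sum>\<sigma>\<in>K. (-1) ^ (card \<sigma> + 1))"

lemma sum_Pow_minus_one_power_card:
  assumes "finite S"
  shows "(\<Sum>T\<in>Pow S. (-1::'a::comm_ring_1) ^ card T) = (if S = {} then 1 else 0)"
  using prod_diff_conv_sum[OF assms, of "\<lambda>_. 1::'a" "\<lambda>_. 1"] assms
  by (simp add: power_0_left)

lemma sum_faces_minus_one_power_card:
  assumes "simplicial_complex K" "\<sigma> \<in> K"
  shows "(\<Sum>\<rho> | \<rho> \<in> K \<and> \<rho> \<subseteq> \<sigma>. (-1::'a::comm_ring_1) ^ (card \<rho> + 1)) = 1"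
proof -
  have \<sigma>: "finite \<sigma>" "\<sigma> \<noteq> {}" and faces: "{\<rho>. \<rho> \<in> K \<and> \<rho> \<subseteq> \<sigma>} = Pow \<sigma> - {{}}"
    using assms unfolding simplicial_complex_def by blast+
  have "(\<Sum>\<rho>\<in>Pow \<sigma>. (-1::'a) ^ (card \<rho> + 1)) = 0"
    using sum_Pow_minus_one_power_card[OF \<sigma>(1)] \<sigma>(2) by (simp add: sum_negf)
  moreover have "(\<Sum>\<rho>\<in>Pow \<sigma>. (-1::'a) ^ (card \<rho> + 1)) =
      (\<Sum>\<rho>\<in>Pow \<sigma> - {{}}. (-1) ^ (card \<rho> + 1)) - 1"
    using \<sigma>(1) by (subst sum.remove[of _ "{}"]) auto
  ultimately show ?thesis
    unfolding faces by simp
qed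

lemma euler_char_elementary_collapse:
  assumes "finite K" "elementary_collapse K L"
  shows "euler_char L = euler_char K"
proof -
  obtain \<sigma> \<tau> where "\<sigma> \<in> K" "\<tau> \<in> K" "\<tau> \<subset> \<sigma>" "card \<sigma> = card \<tau> + 1" "L = K - {\<sigma>, \<tau>}"
    using assms(2) unfolding elementary_collapse_def by blast
  then have "euler_char K = (-1) ^ (card \<sigma> + 1) + (-1) ^ (card \<tau> + 1) + euler_char L"
    unfolding euler_char_def using assms(1)
    by (simp add: sum.remove[of K \<sigma>] sum.remove[of "K - {\<sigma>}" \<tau>] Diff_insert2 [symmetric] insert_commute)
  with \<open>card \<sigma> = card \<tau> + 1\<close> show ?thesis
    by simp
qed

lemma euler_char_simplicial_iso:
  assumes "simplicial_iso f K L"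
  shows "euler_char L = euler_char K"
proof -
  have inj: "inj_on f (\<Union>K)" and L: "L = (\<lambda>\<sigma>. f ` \<sigma>) ` K"
    using assms unfolding simplicial_iso_def bij_betw_def vertices_def by auto
  have "inj_on (\<lambda>\<sigma>. f ` \<sigma>) K"
    using inj by (rule inj_on_image)
  moreover have "card (f ` \<sigma>) = card \<sigma>" if "\<sigma> \<in> K" for \<sigma>
    using inj that by (meson Sup_upper card_image inj_on_subset)
  ultimately show ?thesis
    unfolding euler_char_def L by (simp add: sum.reindex)
qed

lemma euler_char_simple_homotopy_equivalent:
  assumes "simple_homotopy_equivalent K L"
  shows "euler_char K = euler_char L"
proof -
  obtain K' L' :: "nat set set" where
    iso: "isomorphic_complexes K K'" "isomorphic_complexes L L'" and
    moves: "(\<lambda>A B. elementary_move A B \<and> finite_simplicial_complex A \<and>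
               finite_simplicial_complex B)\<^sup>*\<^sup>* K' L'"
    using assms unfolding simple_homotopy_equivalent_def by blast
  from moves have "euler_char L' = euler_char K'"
  proof (induction rule: rtranclp_induct)
    case (step A B)
    then show ?case
      unfolding elementary_move_def finite_simplicial_complex_def
      using euler_char_elementary_collapse by metis
  qed simp
  moreover have "euler_char K' = euler_char K" "euler_char L' = euler_char L"
    using iso euler_char_simplicial_iso unfolding isomorphic_complexes_def by blast+
  ultimately show ?thesis
    by simp
qed

definition zeta_mat :: "nat \<Rightarrow> (nat \<Rightarrow> 'b::order) \<Rightarrow> 'a::field mat" where
  "zeta_mat n x = mat n n (\<lambda>(i, j). if x i \<le> x j then 1 else 0)"

definition poset_mat :: "nat \<Rightarrow> (nat \<Rightarrow> 'b::order) \<Rightarrow> 'a::field mat" where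
  "poset_mat n x = mat n n (\<lambda>(i, j). if x i \<le> x j then 0 else 1)"

lemma dim_poset_mat [simp]:
  "dim_row (poset_mat n x) = n" "dim_col (poset_mat n x) = n"
  by (simp_all add: poset_mat_def)

lemma downset_sums_eq_0_imp_eq_0:
  fixes x :: "nat \<Rightarrow> 'b::order" and f :: "nat \<Rightarrow> 'a::comm_monoid_add"
  assumes inj: "inj_on x {..<n}"
    and sums: "\<And>j. j < n \<Longrightarrow> (\<Sum>i | i < n \<and> x i \<le> x j. f i) = 0"
    and "j < n"
  shows "f j = 0"
  using \<open>j < n\<close>
proof (induction "card {i. i < n \<and> x i < x j}" arbitrary: j rule: less_induct)
  case less
  have below: "f i = 0" if "i < n" "x i < x j" for i
  proof (rule less.hyps[OF _ \<open>i < n\<close>])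
    have "{k. k < n \<and> x k < x i} \<subset> {k. k < n \<and> x k < x j}"
      using that by auto
    then show "card {k. k < n \<and> x k < x i} < card {k. k < n \<and> x k < x j}"
      by (rule psubset_card_mono[rotated]) simp
  qed
  have "{i. i < n \<and> x i \<le> x j} = insert j {i. i < n \<and> x i < x j}"
    using inj less.prems by (auto simp: inj_on_def order_le_less)
  then have "0 = f j + (\<Sum>i | i < n \<and> x i < x j. f i)"
    using sums[OF less.prems] by simp
  also have "(\<Sum>i | i < n \<and> x i < x j. f i) = 0"
    using below by (intro sum.neutral) auto
  finally show ?case
    by simp
qed

lemma sum_lessThan_If_eq_sum_filter:
  "(\<Sum>i<(n::nat). if P i then f i else 0) = (\<Sum>i | i < n \<and> P i. f i)"
  using sum.inter_filter[OF finite_lessThan[of n], of f P] by simp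

lemma transpose_zeta_mat_mult_vec:
  assumes "v \<in> carrier_vec n" "j < n"
  shows "(transpose_mat (zeta_mat n x) *\<^sub>v v) $ j = (\<Sum>i | i < n \<and> x i \<le> x j. v $ i)"
proof -
  have "(transpose_mat (zeta_mat n x) *\<^sub>v v) $ j = (\<Sum>i<n. if x i \<le> x j then v $ i else 0)"
    using assms by (auto simp: zeta_mat_def scalar_prod_def atLeast0LessThan intro: sum.cong)
  then show ?thesis
    by (simp add: sum_lessThan_If_eq_sum_filter)
qed

lemma transpose_poset_mat_mult_vec:
  assumes "v \<in> carrier_vec n" "j < n"
  shows "(transpose_mat (poset_mat n x) *\<^sub>v v) $ j =
    (\<Sum>i<n. v $ i) - (\<Sum>i | i < n \<and> x i \<le> x j. v $ i)"
proof -
  have "(transpose_mat (poset_mat n x) *\<^sub>v v) $ j = (\<Sum>i<n. v $ i - (if x i \<le> x j then v $ i else 0))"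
    using assms by (auto simp: poset_mat_def scalar_prod_def atLeast0LessThan intro: sum.cong)
  then show ?thesis
    by (simp add: sum_subtractf sum_lessThan_If_eq_sum_filter)
qed

lemma det_zeta_mat_neq_0:
  assumes "inj_on x {..<n}"
  shows "det (zeta_mat n x :: 'a::field mat) \<noteq> 0"
proof
  let ?Z = "transpose_mat (zeta_mat n x) :: 'a mat"
  assume "det (zeta_mat n x :: 'a mat) = 0"
  moreover have "det ?Z = det (zeta_mat n x :: 'a mat)"
    by (rule det_transpose[of _ n]) (simp add: zeta_mat_def)
  ultimately have "det ?Z = 0"
    by simp
  then obtain v where v: "v \<in> carrier_vec n" "v \<noteq> 0\<^sub>v n" "?Z *\<^sub>v v = 0\<^sub>v n"
    using det_0_iff_vec_prod_zero_field[of ?Z n] by (auto simp: zeta_mat_def)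
  have "(\<Sum>i | i < n \<and> x i \<le> x j. v $ i) = 0" if "j < n" for j
    using transpose_zeta_mat_mult_vec[OF v(1) that, of x] v(3) that by simp
  then have "v $ j = 0" if "j < n" for j
    using downset_sums_eq_0_imp_eq_0[OF assms, of "\<lambda>i. v $ i"] that by blast
  then have "v = 0\<^sub>v n"
    using v(1) by (intro eq_vecI) auto
  with v(2) show False ..
qed

text \<open>Such a w always exists (w(j) is the sum of the Moebius values mu(i, j) over i \<le> j),
  so the hypothesis on w is no restriction.\<close>

lemma transpose_poset_mat_mult_vec_eq_0_iff:
  fixes x :: "nat \<Rightarrow> 'b::order" and w :: "nat \<Rightarrow> 'a::field"
  assumes inj: "inj_on x {..<n}"
    and w: "\<And>j. j < n \<Longrightarrow> (\<Sum>i | i < n \<and> x i \<le> x j. w i) = 1"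
    and v: "v \<in> carrier_vec n"
  shows "transpose_mat (poset_mat n x) *\<^sub>v v = 0\<^sub>v n \<longleftrightarrow> (\<forall>i<n. v $ i = (\<Sum>k<n. v $ k) * w i)"
proof -
  define s where "s = (\<Sum>k<n. v $ k)"
  have "(transpose_mat (poset_mat n x) *\<^sub>v v) $ j = - (\<Sum>i | i < n \<and> x i \<le> x j. v $ i - s * w i)"
    if "j < n" for j
    using transpose_poset_mat_mult_vec[OF v that] w[OF that]
    by (simp add: s_def sum_subtractf sum_distrib_left[symmetric])
  then have "transpose_mat (poset_mat n x) *\<^sub>v v = 0\<^sub>v n \<longleftrightarrow>
      (\<forall>j<n. (\<Sum>i | i < n \<and> x i \<le> x j. v $ i - s * w i) = 0)"
    by (auto simp: vec_eq_iff)
  also have "\<dots> \<longleftrightarrow> (\<forall>i<n. v $ i - s * w i = 0)"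
  proof (intro iffI allI impI)
    fix i
    assume "\<forall>j<n. (\<Sum>i | i < n \<and> x i \<le> x j. v $ i - s * w i) = 0" and "i < n"
    then show "v $ i - s * w i = 0"
      by (intro downset_sums_eq_0_imp_eq_0[OF inj, where f = "\<lambda>i. v $ i - s * w i"]) auto
  qed (auto intro: sum.neutral)
  finally show ?thesis
    unfolding s_def by simp
qed

lemma det_poset_mat_eq_0_iff:
  fixes x :: "nat \<Rightarrow> 'b::order" and w :: "nat \<Rightarrow> 'a::field"
  assumes inj: "inj_on x {..<n}"
    and w: "\<And>j. j < n \<Longrightarrow> (\<Sum>i | i < n \<and> x i \<le> x j. w i) = 1"
  shows "det (poset_mat n x :: 'a mat) = 0 \<longleftrightarrow> (\<Sum>i<n. w i) = 1"
proof -
  let ?T = "transpose_mat (poset_mat n x) :: 'a mat"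
  have "det (poset_mat n x :: 'a mat) = det ?T"
    by (rule det_transpose[of _ n, symmetric]) (simp add: poset_mat_def)
  also have "det ?T = 0 \<longleftrightarrow> (\<exists>v. v \<in> carrier_vec n \<and> v \<noteq> 0\<^sub>v n \<and> ?T *\<^sub>v v = 0\<^sub>v n)"
    by (rule det_0_iff_vec_prod_zero_field) (simp add: poset_mat_def)
  also have "\<dots> \<longleftrightarrow>
      (\<exists>v. v \<in> carrier_vec n \<and> v \<noteq> 0\<^sub>v n \<and> (\<forall>i<n. v $ i = (\<Sum>k<n. v $ k) * w i))"
    using transpose_poset_mat_mult_vec_eq_0_iff[OF inj w] by blast
  also have "\<dots> \<longleftrightarrow> (\<Sum>i<n. w i) = 1"
  proof
    assume "\<exists>v. v \<in> carrier_vec n \<and> v \<noteq> 0\<^sub>v n \<and> (\<forall>i<n. v $ i = (\<Sum>k<n. v $ k) * w i)"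
    then obtain v s where v: "v \<in> carrier_vec n" "v \<noteq> 0\<^sub>v n" "\<And>i. i < n \<Longrightarrow> v $ i = s * w i"
      and s: "s = (\<Sum>k<n. v $ k)"
      by blast
    have "s \<noteq> 0"
    proof
      assume "s = 0"
      then have "v = 0\<^sub>v n"
        using v by (intro eq_vecI) auto
      with v(2) show False ..
    qed
    moreover have "s = s * (\<Sum>i<n. w i)"
    proof -
      have "s = (\<Sum>i<n. v $ i)"
        by (fact s)
      also have "\<dots> = (\<Sum>i<n. s * w i)"
        using v(3) by (intro sum.cong) auto
      finally show ?thesis
        by (simp add: sum_distrib_left)
    qed
    ultimately show "(\<Sum>i<n. w i) = 1"
      by simp
  next
    assume sum_w: "(\<Sum>i<n. w i) = 1"
    then have "\<exists>i<n. w i \<noteq> 0"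
      by (metis lessThan_iff sum.neutral zero_neq_one)
    then have "vec n w \<noteq> 0\<^sub>v n"
      by (auto simp: vec_eq_iff)
    with sum_w show "\<exists>v. v \<in> carrier_vec n \<and> v \<noteq> 0\<^sub>v n \<and> (\<forall>i<n. v $ i = (\<Sum>k<n. v $ k) * w i)"
      by (intro exI[of _ "vec n w"]) simp
  qed
  finally show ?thesis .
qed

lemma corank_poset_mat:
  fixes x :: "nat \<Rightarrow> 'b::order" and w :: "nat \<Rightarrow> 'a::field"
  assumes inj: "inj_on x {..<n}"
    and w: "\<And>j. j < n \<Longrightarrow> (\<Sum>i | i < n \<and> x i \<le> x j. w i) = 1"
  shows "int n - int (vec_space.rank n (poset_mat n x :: 'a mat)) = (if (\<Sum>i<n. w i) = 1 then 1 else 0)"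
proof -
  let ?M = "poset_mat n x :: 'a mat"
  let ?J = "mat n n (\<lambda>_. -1) :: 'a mat"
  have M: "?M \<in> carrier_mat n n" and J: "?J \<in> carrier_mat n n"
    by (simp_all add: poset_mat_def)
  have "vec_space.rank n (?M + ?J) = n"
  proof -
    have "?M + ?J = (-1) \<cdot>\<^sub>m zeta_mat n x"
      by (rule eq_matI) (auto simp: zeta_mat_def poset_mat_def)
    then have "det (?M + ?J) \<noteq> 0"
      using det_zeta_mat_neq_0[OF inj] by simp
    then show ?thesis
      using vec_space.det_rank_iff[of "?M + ?J" n] M J by simp
  qed
  moreover have "vec_space.rank n ?J \<le> 1"
    by (rule vec_space.rank_le_1_product_entries[OF J, of "\<lambda>_. -1" "\<lambda>_. 1"]) auto
  moreover have "vec_space.rank n (?M + ?J) \<le> vec_space.rank n ?M + vec_space.rank n ?J"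
    by (rule vec_space.rank_subadditive[OF M J])
  moreover have "vec_space.rank n ?M \<le> n"
    by (rule vec_space.rank_le_nc[OF M])
  ultimately have "n \<le> vec_space.rank n ?M + 1" "vec_space.rank n ?M \<le> n"
    by linarith+
  moreover have "vec_space.rank n ?M = n \<longleftrightarrow> (\<Sum>i<n. w i) \<noteq> 1"
    using vec_space.det_rank_iff[OF M] det_poset_mat_eq_0_iff[OF inj w] by blast
  ultimately show ?thesis
    by (cases "(\<Sum>i<n. w i) = 1") simp_all
qed

lemma bij_betw_face_labelling:
  assumes "finite K"
  shows "bij_betw (face_labelling K) {..<card K} K"
proof -
  have "\<exists>x. bij_betw x {..<card K} K"
    using ex_bij_betw_nat_finite[OF assms] by (simp add: atLeast0LessThan)
  then show ?thesis
    unfolding face_labelling_def by (rule someI_ex)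
qed

lemma face_poset_matrix_eq_poset_mat:
  "face_poset_matrix K = poset_mat (card K) (face_labelling K)"
  by (simp add: face_poset_matrix_def poset_mat_def Let_def)

lemma rank_bar_eq_if_euler_char:
  assumes "finite_simplicial_complex K"
  shows "rank_bar K = (if euler_char K = 1 then 1 else 0)"
proof -
  define n where "n = card K"
  define x where "x = face_labelling K"
  define w where "w i = (-1::real) ^ (card (x i) + 1)" for i
  have K: "simplicial_complex K" "finite K"
    using assms unfolding finite_simplicial_complex_def by auto
  have bij: "bij_betw x {..<n} K"
    unfolding x_def n_def using K(2) by (rule bij_betw_face_labelling)
  then have image: "x ` {..<n} = K"
    by (rule bij_betw_imp_surj_on)
  have faces: "(\<Sum>i | i < n \<and> x i \<le> x j. w i) = 1" if "j < n" for j
  proof -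
    have "bij_betw x {i. i < n \<and> x i \<le> x j} {\<rho>. \<rho> \<in> K \<and> \<rho> \<subseteq> x j}"
      using bij by (rule bij_betw_subset) (auto simp: image[symmetric])
    then have "(\<Sum>i | i < n \<and> x i \<le> x j. w i) = (\<Sum>\<rho> | \<rho> \<in> K \<and> \<rho> \<subseteq> x j. (-1) ^ (card \<rho> + 1))"
      unfolding w_def by (rule sum.reindex_bij_betw)
    also have "\<dots> = 1"
      using image that by (intro sum_faces_minus_one_power_card[OF K(1)]) blast
    finally show ?thesis .
  qed
  have "(\<Sum>i<n. w i) = (\<Sum>\<sigma>\<in>K. (-1) ^ (card \<sigma> + 1))"
    unfolding w_def using bij by (rule sum.reindex_bij_betw)
  also have "\<dots> = of_int (euler_char K)"
    by (simp add: euler_char_def)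
  finally have sum_w: "(\<Sum>i<n. w i) = of_int (euler_char K)" .
  have "rank_bar K = int n - int (vec_space.rank n (poset_mat n x :: real mat))"
    by (simp add: rank_bar_def face_poset_matrix_eq_poset_mat n_def x_def)
  also have "\<dots> = (if (\<Sum>i<n. w i) = 1 then 1 else 0)"
    using bij_betw_imp_inj_on[OF bij] faces by (rule corank_poset_mat)
  finally show ?thesis
    unfolding sum_w by simp
qed

theorem mainTheorem10:
  fixes K :: "'a set set" and L :: "'b set set"
  assumes "finite_simplicial_complex K"
    and "finite_simplicial_complex L"
    and "simple_homotopy_equivalent K L"
  shows "rank_bar K = rank_bar L"
  using euler_char_simple_homotopy_equivalent[OF assms(3)]
  by (simp add: rank_bar_eq_if_euler_char assms(1,2))

end
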